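(* Let $\mathbb{K}=(G,M,I)$ be a formal context and let ${\downarrow}\operatorname{Ext}(\mathbb{K})$ be the lattice of all closure systems on $G$ contained in $\operatorname{Ext}(\mathbb{K})$, ordered by inclusion. Then ${\downarrow}\operatorname{Ext}(\mathbb{K})$ (i) is join-semidistributive, (ii) is lower semi-modular, (iii) is meet-distributive, (iv) is join-pseudocomplemented, (v) is ranked, and (vi) is atomistic.
   Context: A formal context is a triple $(G,M,I)$ with finite nonempty sets $G$, $M$ and $I\subseteq G\times M$; derivations $A'=\{m\mid\forall a\in A:(a,m)\in I\}$, $B'=\{g\mid\forall b\in B:(g,b)\in I\}$; $\operatorname{Ext}(\mathbb{K})=\{A\subseteq G\mid A''=A\}$. A closure system on $G$ is a family of subsets of $G$ containing $G$ and closed under intersections; in ${\downarrow}\operatorname{Ext}(\mathbb{K})$ meet is intersection and join is the generated closure system. For a lattice $(L,\le)$ with cover relation $\prec$: $L$ is lower semi-modular iff for all $x,y$: $x\prec x\vee y$ implies $x\wedge y\prec y$; join-semidistributive iff $x\vee y=x\vee z$ implies $x\vee y=x\vee(y\wedge z)$; meet-distributive iff it is join-semidistributive and lower semi-modular; join-pseudocomplemented iff for every $x$ the set $\{y\in L\mid y\vee x=\top\}$ has a least element; ranked iff there is $\rho:L\to\mathbb{N}$ with $x\prec y\Rightarrow\rho(x)+1=\rho(y)$; atomistic iff every element is a join of atoms. *)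

theory Defs
  imports Main
begin

definition formal_context :: "'g set \<Rightarrow> 'm set \<Rightarrow> ('g \<times> 'm) set \<Rightarrow> bool" where
  "formal_context G M I \<longleftrightarrow> finite G \<and> finite M \<and> G \<noteq> {} \<and> M \<noteq> {} \<and> I \<subseteq> G \<times> M"

definition intent :: "'g set \<Rightarrow> 'm set \<Rightarrow> ('g \<times> 'm) set \<Rightarrow> 'g set \<Rightarrow> 'm set" where
  "intent G M I A = {m \<in> M. \<forall>a\<in>A. (a, m) \<in> I}"

definition extent :: "'g set \<Rightarrow> 'm set \<Rightarrow> ('g \<times> 'm) set \<Rightarrow> 'm set \<Rightarrow> 'g set" where
  "extent G M I B = {g \<in> G. \<forall>b\<in>B. (g, b) \<in> I}"

definition Ext :: "'g set \<Rightarrow> 'm set \<Rightarrow> ('g \<times> 'm) set \<Rightarrow> 'g set set" where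
  "Ext G M I = {A. A \<subseteq> G \<and> extent G M I (intent G M I A) = A}"

definition closure_system :: "'g set \<Rightarrow> 'g set set \<Rightarrow> bool" where
  "closure_system G F \<longleftrightarrow> F \<subseteq> Pow G \<and> G \<in> F \<and> (\<forall>X. X \<subseteq> F \<and> X \<noteq> {} \<longrightarrow> \<Inter>X \<in> F)"

definition downExt :: "'g set \<Rightarrow> 'm set \<Rightarrow> ('g \<times> 'm) set \<Rightarrow> 'g set set set" where
  "downExt G M I = {F. closure_system G F \<and> F \<subseteq> Ext G M I}"

definition is_lub :: "'b set \<Rightarrow> ('b \<Rightarrow> 'b \<Rightarrow> bool) \<Rightarrow> 'b set \<Rightarrow> 'b \<Rightarrow> bool" where
  "is_lub L le A x \<longleftrightarrow> x \<in> L \<and> (\<forall>a\<in>A. le a x) \<and> (\<forall>y\<in>L. (\<forall>a\<in>A. le a y) \<longrightarrow> le x y)"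

definition is_glb :: "'b set \<Rightarrow> ('b \<Rightarrow> 'b \<Rightarrow> bool) \<Rightarrow> 'b set \<Rightarrow> 'b \<Rightarrow> bool" where
  "is_glb L le A x \<longleftrightarrow> x \<in> L \<and> (\<forall>a\<in>A. le x a) \<and> (\<forall>y\<in>L. (\<forall>a\<in>A. le y a) \<longrightarrow> le y x)"

definition ljoin :: "'b set \<Rightarrow> ('b \<Rightarrow> 'b \<Rightarrow> bool) \<Rightarrow> 'b \<Rightarrow> 'b \<Rightarrow> 'b" where
  "ljoin L le x y = (THE z. is_lub L le {x, y} z)"

definition lmeet :: "'b set \<Rightarrow> ('b \<Rightarrow> 'b \<Rightarrow> bool) \<Rightarrow> 'b \<Rightarrow> 'b \<Rightarrow> 'b" where
  "lmeet L le x y = (THE z. is_glb L le {x, y} z)"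

definition ltop :: "'b set \<Rightarrow> ('b \<Rightarrow> 'b \<Rightarrow> bool) \<Rightarrow> 'b" where
  "ltop L le = (THE t. t \<in> L \<and> (\<forall>y\<in>L. le y t))"

definition lbot :: "'b set \<Rightarrow> ('b \<Rightarrow> 'b \<Rightarrow> bool) \<Rightarrow> 'b" where
  "lbot L le = (THE b. b \<in> L \<and> (\<forall>y\<in>L. le b y))"

definition lcovers :: "'b set \<Rightarrow> ('b \<Rightarrow> 'b \<Rightarrow> bool) \<Rightarrow> 'b \<Rightarrow> 'b \<Rightarrow> bool" where
  "lcovers L le x y \<longleftrightarrow> x \<in> L \<and> y \<in> L \<and> le x y \<and> x \<noteq> y \<and>
     \<not> (\<exists>z\<in>L. le x z \<and> le z y \<and> z \<noteq> x \<and> z \<noteq> y)"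

definition lower_semimodular :: "'b set \<Rightarrow> ('b \<Rightarrow> 'b \<Rightarrow> bool) \<Rightarrow> bool" where
  "lower_semimodular L le \<longleftrightarrow> (\<forall>x\<in>L. \<forall>y\<in>L.
     lcovers L le x (ljoin L le x y) \<longrightarrow> lcovers L le (lmeet L le x y) y)"

definition join_semidistributive :: "'b set \<Rightarrow> ('b \<Rightarrow> 'b \<Rightarrow> bool) \<Rightarrow> bool" where
  "join_semidistributive L le \<longleftrightarrow> (\<forall>x\<in>L. \<forall>y\<in>L. \<forall>z\<in>L.
     ljoin L le x y = ljoin L le x z \<longrightarrow> ljoin L le x y = ljoin L le x (lmeet L le y z))"

definition meet_distributive :: "'b set \<Rightarrow> ('b \<Rightarrow> 'b \<Rightarrow> bool) \<Rightarrow> bool" where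
  "meet_distributive L le \<longleftrightarrow> join_semidistributive L le \<and> lower_semimodular L le"

definition join_pseudocomplemented :: "'b set \<Rightarrow> ('b \<Rightarrow> 'b \<Rightarrow> bool) \<Rightarrow> bool" where
  "join_pseudocomplemented L le \<longleftrightarrow> (\<forall>x\<in>L. \<exists>y. y \<in> L \<and> ljoin L le y x = ltop L le \<and>
     (\<forall>z\<in>L. ljoin L le z x = ltop L le \<longrightarrow> le y z))"

definition ranked :: "'b set \<Rightarrow> ('b \<Rightarrow> 'b \<Rightarrow> bool) \<Rightarrow> bool" where
  "ranked L le \<longleftrightarrow> (\<exists>\<rho> :: 'b \<Rightarrow> nat. \<forall>x y. lcovers L le x y \<longrightarrow> \<rho> x + 1 = \<rho> y)"

definition atoms :: "'b set \<Rightarrow> ('b \<Rightarrow> 'b \<Rightarrow> bool) \<Rightarrow> 'b set" where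
  "atoms L le = {a. lcovers L le (lbot L le) a}"

definition atomistic :: "'b set \<Rightarrow> ('b \<Rightarrow> 'b \<Rightarrow> bool) \<Rightarrow> bool" where
  "atomistic L le \<longleftrightarrow> (\<forall>x\<in>L. \<exists>A. A \<subseteq> atoms L le \<and> is_lub L le A x)"

end

theory Submission
  imports Defs
begin

(* Everything works for an arbitrary finite closure system E on G in place of Ext(K). The meet
   of two closure subsystems F, H of E is F \<inter> H and their join is the family of all A \<inter> B
   with A \<in> F, B \<in> H.
   If F is covered by H, a minimal member A of H - F can be adjoined to F without leaving the
   closure systems, so H = insert A F. Hence the cardinality is a rank function, and if F is
   covered by its join with H, that join is insert A F with A \<in> H, so H = insert A (F \<inter> H):
   this is lower semimodularity. The atoms are the systems {G, A}.
   Join-semidistributivity is proved by descending induction on the members C of the common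
   join J of F with H and with K: if C \<notin> H, or C \<in> H but C \<notin> K, then C = A \<inter> B with A \<in> F
   and B a strictly larger member of J; otherwise C \<in> H \<inter> K.
   Every member of E is the intersection of the meet-irreducible members above it, and a
   meet-irreducible member of the join of H and F that is not in F must lie in H. So that join
   is E iff H contains all meet-irreducibles outside F, and the join-pseudocomplement of F is
   the closure subsystem generated by them. *)

lemma ljoin_eqI:
  fixes z :: "'a::order"
  assumes "is_lub L (\<le>) {x, y} z"
  shows "ljoin L (\<le>) x y = z"
  unfolding ljoin_def
  by (rule the_equality) (use assms in \<open>auto simp: is_lub_def intro: order.antisym\<close>)

lemma lmeet_eqI:
  fixes z :: "'a::order"
  assumes "is_glb L (\<le>) {x, y} z"
  shows "lmeet L (\<le>) x y = z"
  unfolding lmeet_def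
  by (rule the_equality) (use assms in \<open>auto simp: is_glb_def intro: order.antisym\<close>)

lemma ltop_eqI:
  fixes t :: "'a::order"
  assumes "t \<in> L" "\<And>y. y \<in> L \<Longrightarrow> y \<le> t"
  shows "ltop L (\<le>) = t"
  unfolding ltop_def by (rule the_equality) (use assms in \<open>auto intro: order.antisym\<close>)

lemma lbot_eqI:
  fixes b :: "'a::order"
  assumes "b \<in> L" "\<And>y. y \<in> L \<Longrightarrow> b \<le> y"
  shows "lbot L (\<le>) = b"
  unfolding lbot_def by (rule the_equality) (use assms in \<open>auto intro: order.antisym\<close>)

lemma lcovers_insert:
  assumes "F \<in> L" "insert A F \<in> L" "A \<notin> F"
  shows "lcovers L (\<subseteq>) F (insert A F)"
proof -
  have "H = F \<or> H = insert A F" if "F \<subseteq> H" "H \<subseteq> insert A F" for H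
    using that by blast
  with assms show ?thesis
    unfolding lcovers_def by blast
qed

lemma wf_bounded_supset: "finite G \<Longrightarrow> wf {(B, C). C \<subset> B \<and> B \<subseteq> G}"
  by (rule wf_bounded_set[where ub = "\<lambda>_. G" and f = "\<lambda>C. C"]) auto

lemma finite_superset_induct [consumes 2, case_names step]:
  assumes "finite G" "C \<subseteq> G"
    and step: "\<And>C. C \<subseteq> G \<Longrightarrow> (\<And>B. C \<subset> B \<Longrightarrow> B \<subseteq> G \<Longrightarrow> P B) \<Longrightarrow> P C"
  shows "P C"
  using wf_bounded_supset[OF \<open>finite G\<close>] \<open>C \<subseteq> G\<close>
proof (induction C rule: wf_induct_rule)
  case (less C)
  show ?case
    by (rule step[OF less.prems]) (use less.IH in simp)
qed

lemma closure_system_iff_Int_closed: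
  assumes "finite G"
  shows "closure_system G F \<longleftrightarrow> F \<subseteq> Pow G \<and> G \<in> F \<and> (\<forall>A\<in>F. \<forall>B\<in>F. A \<inter> B \<in> F)"
proof
  assume F: "closure_system G F"
  have "A \<inter> B \<in> F" if "A \<in> F" "B \<in> F" for A B
    using F that unfolding closure_system_def
    by (metis Inter_insert Inter_empty Int_UNIV_right empty_not_insert empty_subsetI insert_subset)
  with F show "F \<subseteq> Pow G \<and> G \<in> F \<and> (\<forall>A\<in>F. \<forall>B\<in>F. A \<inter> B \<in> F)"
    unfolding closure_system_def by blast
next
  assume F: "F \<subseteq> Pow G \<and> G \<in> F \<and> (\<forall>A\<in>F. \<forall>B\<in>F. A \<inter> B \<in> F)"
  have "\<Inter>X \<in> F" if "X \<subseteq> F" "X \<noteq> {}" for X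
  proof -
    have "finite X"
      using that F \<open>finite G\<close> by (meson finite_Pow_iff finite_subset)
    then show ?thesis
      using \<open>X \<noteq> {}\<close> \<open>X \<subseteq> F\<close> F by (induction X rule: finite_ne_induct) auto
  qed
  with F show "closure_system G F" unfolding closure_system_def by blast
qed

lemma intent_antimono: "A \<subseteq> A' \<Longrightarrow> intent G M I A' \<subseteq> intent G M I A"
  unfolding intent_def by blast

lemma extent_antimono: "B \<subseteq> B' \<Longrightarrow> extent G M I B' \<subseteq> extent G M I B"
  unfolding extent_def by blast

lemma subset_extent_intent: "A \<subseteq> G \<Longrightarrow> A \<subseteq> extent G M I (intent G M I A)"
  unfolding extent_def intent_def by blast

lemma Int_Ext:
  assumes "A \<in> Ext G M I" "B \<in> Ext G M I"
  shows "A \<inter> B \<in> Ext G M I"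
proof -
  have A: "A \<subseteq> G" "extent G M I (intent G M I A) = A"
    and B: "B \<subseteq> G" "extent G M I (intent G M I B) = B"
    using assms unfolding Ext_def by blast+
  have "extent G M I (intent G M I (A \<inter> B)) \<subseteq> A"
    by (metis A(2) Int_lower1 extent_antimono intent_antimono)
  moreover have "extent G M I (intent G M I (A \<inter> B)) \<subseteq> B"
    by (metis B(2) Int_lower2 extent_antimono intent_antimono)
  moreover have "A \<inter> B \<subseteq> extent G M I (intent G M I (A \<inter> B))"
    using A(1) by (intro subset_extent_intent) blast
  ultimately show ?thesis
    unfolding Ext_def using A(1) by blast
qed

lemma closure_system_Ext:
  assumes "finite G"
  shows "closure_system G (Ext G M I)"
proof -
  have "G \<in> Ext G M I"
    unfolding Ext_def extent_def intent_def by auto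
  then show ?thesis
    unfolding closure_system_iff_Int_closed[OF assms] using Int_Ext[of _ G M I]
    by (auto simp: Ext_def)
qed

definition closure_subsystems :: "'a set \<Rightarrow> 'a set set \<Rightarrow> 'a set set set" where
  "closure_subsystems G E = {F. closure_system G F \<and> F \<subseteq> E}"

definition pairwise_Int :: "'a set set \<Rightarrow> 'a set set \<Rightarrow> 'a set set" where
  "pairwise_Int F H = {A \<inter> B | A B. A \<in> F \<and> B \<in> H}"

lemma pairwise_IntI: "A \<in> F \<Longrightarrow> B \<in> H \<Longrightarrow> A \<inter> B \<in> pairwise_Int F H"
  unfolding pairwise_Int_def by blast

lemma pairwise_Int_mono: "H \<subseteq> H' \<Longrightarrow> pairwise_Int F H \<subseteq> pairwise_Int F H'"
  unfolding pairwise_Int_def by blast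

lemma mem_pairwise_Int_cases [consumes 1, case_names right_member proper_split]:
  assumes "C \<in> pairwise_Int F H"
  obtains "C \<in> H" | A B where "A \<in> F" "B \<in> H" "C \<subset> B" "C = A \<inter> B"
proof -
  obtain A B where "A \<in> F" "B \<in> H" "C = A \<inter> B"
    using assms unfolding pairwise_Int_def by blast
  then show thesis
    using that by (cases "C = B") auto
qed

definition meet_irreducibles :: "'a set set \<Rightarrow> 'a set set" where
  "meet_irreducibles E = {Q \<in> E. \<forall>B\<in>E. \<forall>C\<in>E. Q = B \<inter> C \<longrightarrow> Q = B \<or> Q = C}"

locale finite_closure_system =
  fixes G :: "'a set" and E :: "'a set set"
  assumes finite_carrier: "finite G" and closure_system: "closure_system G E"
begin

abbreviation \<L> :: "'a set set set" where
  "\<L> \<equiv> closure_subsystems G E"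

lemma E_subset_Pow: "E \<subseteq> Pow G"
  and carrier_in_E: "G \<in> E"
  and Int_in_E: "A \<in> E \<Longrightarrow> B \<in> E \<Longrightarrow> A \<inter> B \<in> E"
  using closure_system unfolding closure_system_iff_Int_closed[OF finite_carrier] by blast+

lemma mem_\<L>_iff: "F \<in> \<L> \<longleftrightarrow> F \<subseteq> E \<and> G \<in> F \<and> (\<forall>A\<in>F. \<forall>B\<in>F. A \<inter> B \<in> F)"
  unfolding closure_subsystems_def closure_system_iff_Int_closed[OF finite_carrier]
  using E_subset_Pow by blast

lemma \<L>I: "F \<subseteq> E \<Longrightarrow> G \<in> F \<Longrightarrow> (\<And>A B. A \<in> F \<Longrightarrow> B \<in> F \<Longrightarrow> A \<inter> B \<in> F) \<Longrightarrow> F \<in> \<L>"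
  and \<L>_subset: "F \<in> \<L> \<Longrightarrow> F \<subseteq> E"
  and \<L>_carrier: "F \<in> \<L> \<Longrightarrow> G \<in> F"
  and \<L>_Int: "F \<in> \<L> \<Longrightarrow> A \<in> F \<Longrightarrow> B \<in> F \<Longrightarrow> A \<inter> B \<in> F"
  unfolding mem_\<L>_iff by blast+

lemma \<L>_mem_subset_carrier: "F \<in> \<L> \<Longrightarrow> A \<in> F \<Longrightarrow> A \<subseteq> G"
  using \<L>_subset E_subset_Pow by blast

lemma finite_\<L>: "F \<in> \<L> \<Longrightarrow> finite F"
  using \<L>_subset E_subset_Pow finite_carrier by (meson finite_Pow_iff finite_subset)

lemma \<L>_Inter:
  assumes "F \<in> \<L>" "Q \<subseteq> F"
  shows "G \<inter> \<Inter>Q \<in> F"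
  \<comment> \<open>the factor G matters only for Q = {}, where \<Inter>Q = UNIV\<close>
proof -
  have "\<forall>X. X \<subseteq> F \<and> X \<noteq> {} \<longrightarrow> \<Inter>X \<in> F"
    using assms(1) unfolding closure_subsystems_def closure_system_def by blast
  moreover have "insert G Q \<subseteq> F"
    using assms(2) \<L>_carrier[OF assms(1)] by simp
  ultimately have "\<Inter>(insert G Q) \<in> F"
    by blast
  then show ?thesis by simp
qed

lemma top_\<L>: "E \<in> \<L>"
  using carrier_in_E Int_in_E by (intro \<L>I) auto

lemma bot_\<L>: "{G} \<in> \<L>"
  using carrier_in_E by (intro \<L>I) auto

lemma Int_\<L>: "F \<in> \<L> \<Longrightarrow> H \<in> \<L> \<Longrightarrow> F \<inter> H \<in> \<L>"
  unfolding mem_\<L>_iff by blast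

lemma Inter_\<L>:
  assumes "\<FF> \<subseteq> \<L>" "\<FF> \<noteq> {}"
  shows "\<Inter>\<FF> \<in> \<L>"
proof (rule \<L>I)
  show "\<Inter>\<FF> \<subseteq> E" "G \<in> \<Inter>\<FF>"
    using assms \<L>_subset \<L>_carrier by blast+
  show "A \<inter> B \<in> \<Inter>\<FF>" if "A \<in> \<Inter>\<FF>" "B \<in> \<Inter>\<FF>" for A B
    using that assms \<L>_Int by blast
qed

lemma pairwise_Int_\<L>:
  assumes "F \<in> \<L>" "H \<in> \<L>"
  shows "pairwise_Int F H \<in> \<L>"
proof (rule \<L>I)
  show "pairwise_Int F H \<subseteq> E"
    using assms \<L>_subset Int_in_E unfolding pairwise_Int_def by blast
  show "G \<in> pairwise_Int F H"
    using assms \<L>_carrier pairwise_IntI[of G F G H] by simp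
next
  fix X Y assume "X \<in> pairwise_Int F H" "Y \<in> pairwise_Int F H"
  then obtain A B A' B' where AB: "A \<in> F" "B \<in> H" "A' \<in> F" "B' \<in> H"
    and XY: "X = A \<inter> B" "Y = A' \<inter> B'"
    unfolding pairwise_Int_def by blast
  have "X \<inter> Y = (A \<inter> A') \<inter> (B \<inter> B')"
    using XY by blast
  moreover have "A \<inter> A' \<in> F" "B \<inter> B' \<in> H"
    using assms AB \<L>_Int by blast+
  ultimately show "X \<inter> Y \<in> pairwise_Int F H"
    by (simp add: pairwise_IntI)
qed

lemma pairwise_Int_upper1: "F \<in> \<L> \<Longrightarrow> H \<in> \<L> \<Longrightarrow> F \<subseteq> pairwise_Int F H"
  using pairwise_IntI[of _ F G H] \<L>_carrier \<L>_mem_subset_carrier by (metis Int_absorb2 subsetI)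

lemma pairwise_Int_upper2: "F \<in> \<L> \<Longrightarrow> H \<in> \<L> \<Longrightarrow> H \<subseteq> pairwise_Int F H"
  using pairwise_IntI[of G F _ H] \<L>_carrier \<L>_mem_subset_carrier by (metis Int_absorb1 subsetI)

lemma pairwise_Int_least: "K \<in> \<L> \<Longrightarrow> F \<subseteq> K \<Longrightarrow> H \<subseteq> K \<Longrightarrow> pairwise_Int F H \<subseteq> K"
  unfolding pairwise_Int_def using \<L>_Int by blast

lemma ljoin_\<L>: "F \<in> \<L> \<Longrightarrow> H \<in> \<L> \<Longrightarrow> ljoin \<L> (\<subseteq>) F H = pairwise_Int F H"
  by (rule ljoin_eqI)
    (simp add: is_lub_def pairwise_Int_\<L> pairwise_Int_upper1 pairwise_Int_upper2 pairwise_Int_least)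

lemma lmeet_\<L>: "F \<in> \<L> \<Longrightarrow> H \<in> \<L> \<Longrightarrow> lmeet \<L> (\<subseteq>) F H = F \<inter> H"
  by (rule lmeet_eqI) (simp add: is_glb_def Int_\<L>)

lemma ltop_\<L>: "ltop \<L> (\<subseteq>) = E"
  using top_\<L> \<L>_subset by (rule ltop_eqI)

lemma lbot_\<L>: "lbot \<L> (\<subseteq>) = {G}"
  using bot_\<L> \<L>_carrier by (intro lbot_eqI) auto

lemma lcovers_\<L>_obtains_insert:
  assumes "lcovers \<L> (\<subseteq>) F H"
  obtains A where "A \<notin> F" "H = insert A F"
proof -
  have F: "F \<in> \<L>" and H: "H \<in> \<L>" and "F \<subset> H"
    using assms unfolding lcovers_def by auto
  then obtain A where A: "A \<in> H - F" and A_minimal: "\<And>B. B \<in> H - F \<Longrightarrow> B \<subseteq> A \<Longrightarrow> A = B"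
    using finite_has_minimal[of "H - F"] finite_\<L>[OF H] by blast
  have "insert A F \<in> \<L>"
  proof (rule \<L>I)
    show "insert A F \<subseteq> E" "G \<in> insert A F"
      using A F H \<L>_subset \<L>_carrier by blast+
  next
    fix X Y assume X: "X \<in> insert A F" and Y: "Y \<in> insert A F"
    show "X \<inter> Y \<in> insert A F"
    proof (cases "X \<inter> Y \<in> F")
      case False
      \<comment> \<open>then one of X, Y is A, so X \<inter> Y is a member of H - F below A\<close>
      then have "X \<inter> Y \<subseteq> A"
        using X Y F \<L>_Int by blast
      moreover have "X \<inter> Y \<in> H - F"
        using False X Y A \<open>F \<subset> H\<close> H \<L>_Int by blast
      ultimately show ?thesis
        using A_minimal by blast
    qed simp
  qed
  moreover have "F \<subseteq> insert A F" "insert A F \<subseteq> H" "insert A F \<noteq> F"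
    using A \<open>F \<subset> H\<close> by auto
  ultimately have "H = insert A F"
    using assms unfolding lcovers_def by blast
  with A that show thesis by blast
qed

lemma ranked_\<L>: "ranked \<L> (\<subseteq>)"
  unfolding ranked_def
proof (intro exI allI impI)
  fix F H assume cover: "lcovers \<L> (\<subseteq>) F H"
  then obtain A where "A \<notin> F" "H = insert A F"
    by (rule lcovers_\<L>_obtains_insert)
  moreover have "finite F"
    using cover finite_\<L> unfolding lcovers_def by blast
  ultimately show "card F + 1 = card H" by simp
qed

lemma lower_semimodular_\<L>: "lower_semimodular \<L> (\<subseteq>)"
  unfolding lower_semimodular_def
proof (intro ballI impI)
  fix F H assume F: "F \<in> \<L>" and H: "H \<in> \<L>" and "lcovers \<L> (\<subseteq>) F (ljoin \<L> (\<subseteq>) F H)"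
  then have "lcovers \<L> (\<subseteq>) F (pairwise_Int F H)"
    by (simp add: ljoin_\<L>)
  then obtain A where A: "A \<notin> F" "pairwise_Int F H = insert A F"
    by (rule lcovers_\<L>_obtains_insert)
  have "H \<subseteq> insert A F"
    using pairwise_Int_upper2[OF F H] A(2) by simp
  moreover have "A \<in> H"
  proof (rule ccontr)
    assume "A \<notin> H"
    then have "H \<subseteq> F"
      using \<open>H \<subseteq> insert A F\<close> by blast
    then have "pairwise_Int F H \<subseteq> F"
      using pairwise_Int_least[OF F] by blast
    with A show False by blast
  qed
  ultimately have "H = insert A (F \<inter> H)"
    by blast
  moreover have "lcovers \<L> (\<subseteq>) (F \<inter> H) (insert A (F \<inter> H))"
    using Int_\<L>[OF F H] H A(1) calculation by (intro lcovers_insert) auto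
  ultimately show "lcovers \<L> (\<subseteq>) (lmeet \<L> (\<subseteq>) F H) H"
    by (simp add: lmeet_\<L>[OF F H])
qed

lemma pairwise_Int_absorb:
  assumes "F \<in> \<L>" "H \<in> \<L>" "A \<in> F" "B \<in> pairwise_Int F H"
  shows "A \<inter> B \<in> pairwise_Int F H"
  using assms \<L>_Int[OF pairwise_Int_\<L>] pairwise_Int_upper1 by blast

lemma pairwise_Int_subset_pairwise_Int_Int:
  assumes F: "F \<in> \<L>" and H: "H \<in> \<L>" and K: "K \<in> \<L>"
    and eq: "pairwise_Int F H = pairwise_Int F K"
  shows "pairwise_Int F H \<subseteq> pairwise_Int F (H \<inter> K)"
proof
  fix C assume C: "C \<in> pairwise_Int F H"
  have HK: "H \<inter> K \<in> \<L>"
    using H K by (rule Int_\<L>)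
  have "C \<subseteq> G"
    using C pairwise_Int_\<L>[OF F H] \<L>_mem_subset_carrier by blast
  with finite_carrier show "C \<in> pairwise_Int F (H \<inter> K)"
    using C
  proof (induction C rule: finite_superset_induct)
    case (step C)
    have reduce: "C \<in> pairwise_Int F (H \<inter> K)"
      if "A \<in> F" "B \<in> pairwise_Int F H" "C \<subset> B" "C = A \<inter> B" for A B
    proof -
      have "B \<subseteq> G"
        using that(2) pairwise_Int_\<L>[OF F H] \<L>_mem_subset_carrier by blast
      with that step.IH have "B \<in> pairwise_Int F (H \<inter> K)"
        by blast
      with that show ?thesis
        using pairwise_Int_absorb[OF F HK] by blast
    qed
    from step.prems show ?case
    proof (cases rule: mem_pairwise_Int_cases)
      case right_member
      from step.prems eq have "C \<in> pairwise_Int F K"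
        by simp
      then show ?thesis
      proof (cases rule: mem_pairwise_Int_cases)
        case right_member
        with \<open>C \<in> H\<close> show ?thesis
          using pairwise_Int_upper2[OF F HK] by blast
      next
        case (proper_split A B)
        then show ?thesis
          using reduce eq pairwise_Int_upper2[OF F K] by blast
      qed
    next
      case (proper_split A B)
      then show ?thesis
        using reduce pairwise_Int_upper2[OF F H] by blast
    qed
  qed
qed

lemma join_semidistributive_\<L>: "join_semidistributive \<L> (\<subseteq>)"
  unfolding join_semidistributive_def
proof (intro ballI impI)
  fix F H K assume F: "F \<in> \<L>" and H: "H \<in> \<L>" and K: "K \<in> \<L>"
    and "ljoin \<L> (\<subseteq>) F H = ljoin \<L> (\<subseteq>) F K"
  then have "pairwise_Int F H = pairwise_Int F K"
    by (simp add: ljoin_\<L>)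
  then have "pairwise_Int F H = pairwise_Int F (H \<inter> K)"
    using pairwise_Int_subset_pairwise_Int_Int[OF F H K] pairwise_Int_mono[of "H \<inter> K" H F]
    by blast
  then show "ljoin \<L> (\<subseteq>) F H = ljoin \<L> (\<subseteq>) F (lmeet \<L> (\<subseteq>) H K)"
    by (simp add: ljoin_\<L> lmeet_\<L> F H K Int_\<L>)
qed

lemma atoms_\<L>: "{{G, A} | A. A \<in> E \<and> A \<noteq> G} \<subseteq> atoms \<L> (\<subseteq>)"
proof
  fix P assume "P \<in> {{G, A} | A. A \<in> E \<and> A \<noteq> G}"
  then obtain A where P: "P = {G, A}" and A: "A \<in> E" "A \<noteq> G"
    by blast
  have "A \<subseteq> G"
    using A E_subset_Pow by blast
  then have "insert A {G} \<in> \<L>"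
    using A carrier_in_E by (intro \<L>I) auto
  then have "lcovers \<L> (\<subseteq>) {G} (insert A {G})"
    using A bot_\<L> by (intro lcovers_insert) auto
  then show "P \<in> atoms \<L> (\<subseteq>)"
    unfolding atoms_def lbot_\<L> P by (simp add: insert_commute)
qed

lemma atomistic_\<L>: "atomistic \<L> (\<subseteq>)"
  unfolding atomistic_def
proof
  fix F assume F: "F \<in> \<L>"
  let ?atoms = "{{G, A} | A. A \<in> F \<and> A \<noteq> G}"
  have "?atoms \<subseteq> atoms \<L> (\<subseteq>)"
    using atoms_\<L> \<L>_subset[OF F] by blast
  moreover have "F \<subseteq> K" if "K \<in> \<L>" "\<forall>P\<in>?atoms. P \<subseteq> K" for K
  proof
    fix A assume "A \<in> F"
    with that show "A \<in> K"
      using \<L>_carrier[of K] by (cases "A = G") auto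
  qed
  then have "is_lub \<L> (\<subseteq>) ?atoms F"
    unfolding is_lub_def using F \<L>_carrier[OF F] by auto
  ultimately show "\<exists>As. As \<subseteq> atoms \<L> (\<subseteq>) \<and> is_lub \<L> (\<subseteq>) As F"
    by blast
qed

lemma Inter_meet_irreducibles:
  assumes "A \<in> E"
  shows "\<Inter>{Q \<in> meet_irreducibles E. A \<subseteq> Q} = A"
proof -
  have "A \<subseteq> G"
    using assms E_subset_Pow by blast
  with finite_carrier show ?thesis
    using assms
  proof (induction A rule: finite_superset_induct)
    case (step A)
    show ?case
    proof (cases "A \<in> meet_irreducibles E")
      case False
      then obtain B C where BC: "B \<in> E" "C \<in> E" "A = B \<inter> C" "A \<subset> B" "A \<subset> C"
        using step.prems unfolding meet_irreducibles_def by blast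
      have "\<Inter>{Q \<in> meet_irreducibles E. A \<subseteq> Q} \<subseteq> D"
        if "A \<subset> D" "D \<in> E" for D
      proof -
        have "\<Inter>{Q \<in> meet_irreducibles E. A \<subseteq> Q} \<subseteq> \<Inter>{Q \<in> meet_irreducibles E. D \<subseteq> Q}"
          using that(1) by (intro Inter_anti_mono) blast
        also have "\<dots> = D"
          using that E_subset_Pow by (intro step.IH) auto
        finally show ?thesis .
      qed
      then have "\<Inter>{Q \<in> meet_irreducibles E. A \<subseteq> Q} \<subseteq> B \<inter> C"
        using BC by blast
      with BC(3) show ?thesis
        by blast
    qed auto
  qed
qed

lemma pairwise_Int_eq_top_iff:
  assumes F: "F \<in> \<L>" and H: "H \<in> \<L>"
  shows "pairwise_Int H F = E \<longleftrightarrow> meet_irreducibles E - F \<subseteq> H"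
proof
  assume top: "pairwise_Int H F = E"
  show "meet_irreducibles E - F \<subseteq> H"
  proof
    fix Q assume Q: "Q \<in> meet_irreducibles E - F"
    then have "Q \<in> pairwise_Int H F"
      using top unfolding meet_irreducibles_def by blast
    then obtain B C where BC: "B \<in> H" "C \<in> F" "Q = B \<inter> C"
      unfolding pairwise_Int_def by blast
    moreover have "B \<in> E" "C \<in> E"
      using BC F H \<L>_subset by blast+
    ultimately have "Q = B \<or> Q = C"
      using Q unfolding meet_irreducibles_def by blast
    with Q BC show "Q \<in> H"
      by auto
  qed
next
  assume irreducibles: "meet_irreducibles E - F \<subseteq> H"
  show "pairwise_Int H F = E"
  proof
    show "pairwise_Int H F \<subseteq> E"
      using pairwise_Int_\<L>[OF H F] by (rule \<L>_subset)
  next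
    show "E \<subseteq> pairwise_Int H F"
    proof
      fix A assume A: "A \<in> E"
      let ?above = "\<lambda>S. {Q \<in> S. A \<subseteq> Q}"
      let ?outside = "G \<inter> \<Inter>(?above (meet_irreducibles E - F))"
      let ?inside = "G \<inter> \<Inter>(?above (meet_irreducibles E \<inter> F))"
      have "A = \<Inter>(?above (meet_irreducibles E))"
        using Inter_meet_irreducibles[OF A] by simp
      also have "?above (meet_irreducibles E)
          = ?above (meet_irreducibles E - F) \<union> ?above (meet_irreducibles E \<inter> F)"
        by blast
      finally have "A = \<Inter>(?above (meet_irreducibles E - F)) \<inter> \<Inter>(?above (meet_irreducibles E \<inter> F))"
        by (simp only: Inter_Un_distrib)
      moreover have "A \<subseteq> G"
        using A E_subset_Pow by blast
      ultimately have split: "A = ?outside \<inter> ?inside"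
        by (simp only: Int_absorb1 Int_assoc Int_left_commute)
      have "?outside \<in> H"
        using irreducibles by (intro \<L>_Inter[OF H]) blast
      moreover have "?inside \<in> F"
        by (intro \<L>_Inter[OF F]) blast
      ultimately show "A \<in> pairwise_Int H F"
        by (subst split) (rule pairwise_IntI)
    qed
  qed
qed

lemma join_pseudocomplemented_\<L>: "join_pseudocomplemented \<L> (\<subseteq>)"
  unfolding join_pseudocomplemented_def
proof
  fix F assume F: "F \<in> \<L>"
  define P where "P = \<Inter>{H \<in> \<L>. meet_irreducibles E - F \<subseteq> H}"
  have "E \<in> {H \<in> \<L>. meet_irreducibles E - F \<subseteq> H}"
    using top_\<L> unfolding meet_irreducibles_def by blast
  then have P: "P \<in> \<L>"
    unfolding P_def by (intro Inter_\<L>) blast+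
  have "meet_irreducibles E - F \<subseteq> P"
    unfolding P_def by blast
  then have "ljoin \<L> (\<subseteq>) P F = ltop \<L> (\<subseteq>)"
    using pairwise_Int_eq_top_iff[OF F P] by (simp add: ljoin_\<L>[OF P F] ltop_\<L>)
  moreover have "P \<subseteq> H" if "H \<in> \<L>" "ljoin \<L> (\<subseteq>) H F = ltop \<L> (\<subseteq>)" for H
    using that pairwise_Int_eq_top_iff[OF F, of H]
    unfolding P_def by (simp add: ljoin_\<L>[OF _ F] ltop_\<L> Inter_lower)
  ultimately show "\<exists>P. P \<in> \<L> \<and> ljoin \<L> (\<subseteq>) P F = ltop \<L> (\<subseteq>) \<and>
      (\<forall>H\<in>\<L>. ljoin \<L> (\<subseteq>) H F = ltop \<L> (\<subseteq>) \<longrightarrow> P \<subseteq> H)"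
    using P by blast
qed

end

lemma downExt_eq_closure_subsystems: "downExt G M I = closure_subsystems G (Ext G M I)"
  unfolding downExt_def closure_subsystems_def ..

theorem proposition7:
  fixes G :: "'g set" and M :: "'m set" and I :: "('g \<times> 'm) set"
  assumes "formal_context G M I"
  shows "join_semidistributive (downExt G M I) (\<subseteq>)
    \<and> lower_semimodular (downExt G M I) (\<subseteq>)
    \<and> meet_distributive (downExt G M I) (\<subseteq>)
    \<and> join_pseudocomplemented (downExt G M I) (\<subseteq>)
    \<and> ranked (downExt G M I) (\<subseteq>)
    \<and> atomistic (downExt G M I) (\<subseteq>)"
proof -
  have "finite G"
    using assms unfolding formal_context_def by blast
  then interpret finite_closure_system G "Ext G M I"
    by (intro finite_closure_system.intro closure_system_Ext)
  show ?thesis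
    unfolding downExt_eq_closure_subsystems meet_distributive_def
    using join_semidistributive_\<L> lower_semimodular_\<L> join_pseudocomplemented_\<L>
      ranked_\<L> atomistic_\<L>
    by blast
qed

end
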